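(* Let $m\ge1$ and consider a preferential (dynamic) attachment circuit of index $m$. For a fixed node label $j\ge0$ let $D^{(m)}_{n,j}$ be the degree (indegree plus outdegree, edges counted with multiplicity) of node $j$ at time $n\ge j$. Then, as $n\to\infty$, $$\mathbb{E}\bigl[D^{(m)}_{n,j}\bigr]\sim\frac{\Gamma\bigl(j+\frac1{m+1}\bigr)}{\Gamma(j+1)}\,n^{\frac m{m+1}},\qquad \mathbb{V}\mathrm{ar}\bigl[D^{(m)}_{n,j}\bigr]\sim\left(\frac{2(m+1)\,\Gamma\bigl(j+\frac2{m+1}\bigr)}{((m+1)j+1)\,\Gamma(j+1)}-\frac{\Gamma^2\bigl(j+\frac1{m+1}\bigr)}{\Gamma^2(j+1)}\right)n^{\frac{2m}{m+1}}.$$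
   Context: Preferential (dynamic) attachment circuit of index $m\ge1$: at time $0$ there is a single node labeled $0$. At each time $n\ge1$ a new node labeled $n$ is added and $m$ parents are chosen for it one at a time, with replacement, among nodes $0,\dots,n-1$. Before the $(i+1)$-th choice ($i=0,\dots,m-1$), each existing node $v$ is chosen with probability $\frac{d_i(v)+1}{\sum_{x}(d_i(x)+1)}$, where $d_i(x)$ is the outdegree of $x$ in the current multigraph including the edges created by the first $i$ choices for node $n$; after each choice an edge from the chosen parent to node $n$ is immediately added (multi-edges allowed). *)

theory Defs
  imports "HOL-Probability.Probability" "HOL-Library.Landau_Symbols"
begin

text \<open>The multigraph is a multiset of directed edges (parent, child).\<close>

definition outdeg :: "(nat \<times> nat) multiset \<Rightarrow> nat \<Rightarrow> nat" where
  "outdeg E x = size (filter_mset (\<lambda>e. fst e = x) E)"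

definition indeg :: "(nat \<times> nat) multiset \<Rightarrow> nat \<Rightarrow> nat" where
  "indeg E x = size (filter_mset (\<lambda>e. snd e = x) E)"

definition degree :: "(nat \<times> nat) multiset \<Rightarrow> nat \<Rightarrow> nat" where
  "degree E x = indeg E x + outdeg E x"

text \<open>Choose a parent among nodes 0..n-1, node v with probability proportional to
  outdeg v + 1 (uniform draw from the multiset where v occurs outdeg v + 1 times).\<close>
definition choose_parent :: "nat \<Rightarrow> (nat \<times> nat) multiset \<Rightarrow> nat pmf" where
  "choose_parent n E = pmf_of_multiset (\<Sum>v<n. replicate_mset (outdeg E v + 1) v)"

fun add_parents :: "nat \<Rightarrow> (nat \<times> nat) multiset \<Rightarrow> nat \<Rightarrow> (nat \<times> nat) multiset pmf" where
  "add_parents n E 0 = return_pmf E"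
| "add_parents n E (Suc i) =
     bind_pmf (add_parents n E i) (\<lambda>E'. map_pmf (\<lambda>v. add_mset (v, n) E') (choose_parent n E'))"

fun pa_circuit :: "nat \<Rightarrow> nat \<Rightarrow> (nat \<times> nat) multiset pmf" where
  "pa_circuit m 0 = return_pmf {#}"
| "pa_circuit m (Suc n) = bind_pmf (pa_circuit m n) (\<lambda>E. add_parents (Suc n) E m)"

end

theory Submission
  imports Defs
begin

text \<open>
  Once node \<open>j\<close> is born, its degree differs by a constant from its attachment weight
  \<open>w = outdeg + 1\<close>. A parent drawn against total weight \<open>S\<close> is \<open>j\<close> with probability \<open>w / S\<close>,
  so the rising factorial \<open>pochhammer w k\<close> gains the factor \<open>1 + k / S\<close> in expectation.
  The \<open>m\<close> draws of one time step telescope, and \<open>E[pochhammer w k]\<close> becomes a product of \<open>k\<close>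
  quotients of Pochhammer symbols, each growing like a ratio of Gamma values times \<open>n powr (m/(m+1))\<close>
  by Gauss's limit formula. Mean and variance are read off from \<open>k = 1, 2\<close>; the variance constant
  is nonzero by the strict log-convexity of Gamma.
\<close>

lemma pochhammer_quotient_limit:
  fixes a b :: real
  assumes "a > 0" "b > 0"
  shows "(\<lambda>n. pochhammer a n / pochhammer b n / real n powr (a - b)) \<longlonglongrightarrow> Gamma b / Gamma a"
proof -
  have "(\<lambda>n. Gamma_series' b n / Gamma_series' a n) \<longlonglongrightarrow> Gamma b / Gamma a"
    using assms by (intro tendsto_divide Gamma_series'_LIMSEQ) (simp add: Gamma_real_pos dual_order.strict_implies_not_eq)
  moreover have "eventually (\<lambda>n. Gamma_series' b n / Gamma_series' a n
      = pochhammer a n / pochhammer b n / real n powr (a - b)) sequentially"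
    using eventually_gt_at_top[of 0]
  proof eventually_elim
    case (elim n)
    then show ?case
      using assms by (simp add: Gamma_series'_def powr_def exp_diff pochhammer_pos field_simps
          dual_order.strict_implies_not_eq)
  qed
  ultimately show ?thesis by (rule Lim_transform_eventually)
qed

lemma prod_shifted_quotient_limit:
  fixes a b :: real
  assumes "a > 0" "b > 0"
  shows "(\<lambda>n. (\<Prod>t=j..<n. (real t + a) / (real t + b)) / real n powr (a - b))
           \<longlonglongrightarrow> Gamma (real j + b) / Gamma (real j + a)"
proof -
  have not_nonpos: "z \<notin> \<int>\<^sub>\<le>\<^sub>0" if "z > 0" for z :: real
    using that nonpos_Ints_nonpos by fastforce
  have "(\<lambda>n. pochhammer a n / pochhammer b n / real n powr (a - b) * (pochhammer b j / pochhammer a j))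
      \<longlonglongrightarrow> Gamma b / Gamma a * (pochhammer b j / pochhammer a j)"
    by (intro tendsto_mult_right pochhammer_quotient_limit assms)
  also have "Gamma b / Gamma a * (pochhammer b j / pochhammer a j) = Gamma (real j + b) / Gamma (real j + a)"
    using assms by (simp add: pochhammer_Gamma not_nonpos Gamma_real_pos dual_order.strict_implies_not_eq add.commute)
  finally have lim: "(\<lambda>n. pochhammer a n / pochhammer b n / real n powr (a - b) * (pochhammer b j / pochhammer a j))
      \<longlonglongrightarrow> Gamma (real j + b) / Gamma (real j + a)" .
  have poch_split: "pochhammer z n = pochhammer z j * (\<Prod>t=j..<n. real t + z)" if "j \<le> n" for z :: real and n
    using prod.atLeastLessThan_concat[of 0 j n "\<lambda>t. z + real t"] that
    by (simp add: pochhammer_prod add.commute)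
  have "eventually (\<lambda>n. pochhammer a n / pochhammer b n / real n powr (a - b) * (pochhammer b j / pochhammer a j)
      = (\<Prod>t=j..<n. (real t + a) / (real t + b)) / real n powr (a - b)) sequentially"
    using eventually_ge_at_top[of j]
  proof eventually_elim
    case (elim n)
    then show ?case
      using assms by (simp add: poch_split[OF elim] prod_dividef pochhammer_pos dual_order.strict_implies_not_eq)
  qed
  with lim show ?thesis by (rule Lim_transform_eventually)
qed

lemma pochhammer_square_quotient_ge:
  fixes x c :: real
  assumes "0 < c" "c < x" "n \<ge> 1"
  shows "x\<^sup>2 / (x\<^sup>2 - c\<^sup>2) \<le> (pochhammer x n)\<^sup>2 / (pochhammer (x - c) n * pochhammer (x + c) n)"
  using assms(3)
proof (induction n rule: nat_induct_at_least)
  case base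
  then show ?case by (simp add: power2_eq_square algebra_simps)
next
  case (Suc n)
  have "0 < (x - c + real n) * (x + c + real n)"
    using assms by (intro mult_pos_pos) auto
  moreover have "(x - c + real n) * (x + c + real n) \<le> (x + real n)\<^sup>2"
    by (simp add: power2_eq_square algebra_simps)
  ultimately have factor_ge: "1 \<le> (x + real n)\<^sup>2 / ((x - c + real n) * (x + c + real n))"
    by simp
  have "x\<^sup>2 / (x\<^sup>2 - c\<^sup>2) * 1
      \<le> (pochhammer x n)\<^sup>2 / (pochhammer (x - c) n * pochhammer (x + c) n)
         * ((x + real n)\<^sup>2 / ((x - c + real n) * (x + c + real n)))"
    using assms
    by (intro mult_mono Suc.IH factor_ge divide_nonneg_nonneg mult_nonneg_nonneg pochhammer_nonneg) auto
  also have "\<dots> = (pochhammer x (Suc n))\<^sup>2 / (pochhammer (x - c) (Suc n) * pochhammer (x + c) (Suc n))"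
    by (simp add: pochhammer_Suc power_mult_distrib ac_simps)
  finally show ?case by simp
qed

text \<open>Strict log-convexity of \<open>Gamma\<close>: the Pochhammer quotient above tends to
  \<open>Gamma (x - c) * Gamma (x + c) / (Gamma x)\<^sup>2\<close> and never drops below its first factor, which exceeds 1.\<close>
lemma Gamma_square_less:
  fixes x c :: real
  assumes "0 < c" "c < x"
  shows "(Gamma x)\<^sup>2 < Gamma (x - c) * Gamma (x + c)"
proof -
  have Gx: "Gamma x > 0" using assms by (simp add: Gamma_real_pos)
  have "(\<lambda>n. pochhammer x n / pochhammer (x - c) n / real n powr (x - (x - c))
            * (pochhammer x n / pochhammer (x + c) n / real n powr (x - (x + c))))
        \<longlonglongrightarrow> Gamma (x - c) / Gamma x * (Gamma (x + c) / Gamma x)"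
    using assms by (intro tendsto_mult pochhammer_quotient_limit) auto
  also have "Gamma (x - c) / Gamma x * (Gamma (x + c) / Gamma x) = Gamma (x - c) * Gamma (x + c) / (Gamma x)\<^sup>2"
    by (simp add: power2_eq_square)
  finally have lim: "(\<lambda>n. pochhammer x n / pochhammer (x - c) n / real n powr (x - (x - c))
            * (pochhammer x n / pochhammer (x + c) n / real n powr (x - (x + c))))
        \<longlonglongrightarrow> Gamma (x - c) * Gamma (x + c) / (Gamma x)\<^sup>2" .
  have "eventually (\<lambda>n. pochhammer x n / pochhammer (x - c) n / real n powr (x - (x - c))
            * (pochhammer x n / pochhammer (x + c) n / real n powr (x - (x + c)))
        = (pochhammer x n)\<^sup>2 / (pochhammer (x - c) n * pochhammer (x + c) n)) sequentially"
    using eventually_gt_at_top[of 0]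
  proof eventually_elim
    case (elim n)
    then show ?case by (simp add: power2_eq_square powr_minus field_simps)
  qed
  with lim have quotient_lim: "(\<lambda>n. (pochhammer x n)\<^sup>2 / (pochhammer (x - c) n * pochhammer (x + c) n))
      \<longlonglongrightarrow> Gamma (x - c) * Gamma (x + c) / (Gamma x)\<^sup>2"
    by (rule Lim_transform_eventually)
  define q where "q = x\<^sup>2 / (x\<^sup>2 - c\<^sup>2)"
  have "q \<le> Gamma (x - c) * Gamma (x + c) / (Gamma x)\<^sup>2"
    unfolding q_def using assms
    by (intro LIMSEQ_le_const[OF quotient_lim] exI[of _ 1] allI impI pochhammer_square_quotient_ge)
  then have upper: "q * (Gamma x)\<^sup>2 \<le> Gamma (x - c) * Gamma (x + c)"
    using Gx by (simp add: le_divide_eq)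
  have "c\<^sup>2 < x\<^sup>2"
    using assms by (simp add: power_strict_mono)
  then have "1 < q"
    unfolding q_def using assms by (simp add: less_divide_eq_1)
  then have "(Gamma x)\<^sup>2 < q * (Gamma x)\<^sup>2"
    using Gx by simp
  also note upper
  finally show ?thesis .
qed

lemma Gamma_quotient_square_less:
  fixes y c :: real
  assumes "0 < c" "0 \<le> y"
  shows "(Gamma (y + c) / Gamma (y + 1))\<^sup>2 < 2 * (Gamma (y + c) / Gamma (y + 1) * (Gamma (y + 2 * c) / Gamma (y + (1 + c))))"
proof -
  have not_nonpos: "z \<notin> \<int>\<^sub>\<le>\<^sub>0" if "z > 0" for z :: real
    using that nonpos_Ints_nonpos by fastforce
  have pos: "0 < y + c" "0 < Gamma (y + c)" "0 < Gamma (y + 2 * c)" "0 < Gamma (y + 1)"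
    using assms by (simp_all add: Gamma_real_pos)
  have shift: "Gamma (y + (1 + c)) = (y + c) * Gamma (y + c)"
    using Gamma_plus1[OF not_nonpos[OF pos(1)]] by (simp add: ac_simps)
  have "(Gamma (y + (1 + c)))\<^sup>2 < Gamma (y + (1 + c) - c) * Gamma (y + (1 + c) + c)"
    using assms by (intro Gamma_square_less) auto
  also have "Gamma (y + (1 + c) + c) = (y + 2 * c) * Gamma (y + 2 * c)"
    using Gamma_plus1[OF not_nonpos, of "y + 2 * c"] assms by (simp add: ac_simps mult_2)
  also have "(y + 2 * c) * Gamma (y + 2 * c) \<le> 2 * (y + c) * Gamma (y + 2 * c)"
    using assms pos by (intro mult_right_mono) auto
  finally have "(y + c) * ((y + c) * (Gamma (y + c))\<^sup>2) < (y + c) * (2 * Gamma (y + 1) * Gamma (y + 2 * c))"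
    using pos unfolding shift by (simp add: mult_left_mono power2_eq_square algebra_simps)
  then have "(y + c) * (Gamma (y + c))\<^sup>2 < 2 * Gamma (y + 1) * Gamma (y + 2 * c)"
    using pos by simp
  moreover have "Gamma (y + c) \<noteq> 0"
    using pos(2) by linarith
  ultimately show ?thesis
    using pos unfolding shift by (simp add: power2_eq_square divide_simps ac_simps)
qed

lemma tendsto_divide_powr_zero:
  assumes "0 < p"
  shows "(\<lambda>n. a / real n powr p) \<longlonglongrightarrow> 0"
proof -
  have "(\<lambda>n. a * real n powr (- p)) \<longlonglongrightarrow> a * 0"
    using assms by (intro tendsto_mult tendsto_const tendsto_neg_powr filterlim_real_sequentially) auto
  then show ?thesis
    by (simp add: powr_minus divide_inverse)
qed

lemma pochhammer_succ_diff:
  fixes z :: "'a :: comm_ring_1"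
  shows "z * (pochhammer (z + 1) k - pochhammer z k) = of_nat k * pochhammer z k"
proof (cases k)
  case (Suc k')
  have "pochhammer z (Suc k') = z * pochhammer (z + 1) k'"
    by (rule pochhammer_rec)
  then show ?thesis
    using Suc by (simp add: pochhammer_Suc algebra_simps)
qed simp

lemma prod_one_plus_div_telescope:
  fixes a :: real
  assumes "0 < a"
  shows "(\<Prod>l<m. 1 + real k / (a + real l)) = pochhammer (a + real m) k / pochhammer a k"
proof (induction m)
  case 0
  show ?case using pochhammer_pos[OF assms, of k] by simp
next
  case (Suc m)
  have pos: "0 < a + real m" using assms by simp
  have "a + real m + real k = (a + real m) * (1 + real k / (a + real m))"
    using pos by (simp add: field_simps)
  then have "pochhammer (a + real m + 1) k = pochhammer (a + real m) k * (1 + real k / (a + real m))"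
    using pochhammer_succ_diff[of "a + real m" k] pos by (simp add: field_simps)
  then show ?case
    using Suc by (simp add: ac_simps)
qed

definition weight :: "(nat \<times> nat) multiset \<Rightarrow> nat \<Rightarrow> real" where
  "weight E v = real (outdeg E v) + 1"

lemma weight_add_edge: "weight (add_mset (v, N) E) j = weight E j + indicator {j} v"
  by (simp add: weight_def outdeg_def indicator_def)

lemma sum_outdeg:
  assumes "\<forall>e\<in>#E. fst e < N"
  shows "(\<Sum>v<N. outdeg E v) = size E"
  using assms
proof (induction E)
  case (add e E)
  have "outdeg (add_mset e E) v = outdeg E v + (if fst e = v then 1 else 0)" for v
    by (simp add: outdeg_def)
  with add show ?case
    by (simp add: sum.distrib)
qed (simp add: outdeg_def)

definition parent_urn :: "nat \<Rightarrow> (nat \<times> nat) multiset \<Rightarrow> nat multiset" where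
  "parent_urn N E = (\<Sum>v<N. replicate_mset (outdeg E v + 1) v)"

lemma choose_parent_urn: "choose_parent N E = pmf_of_multiset (parent_urn N E)"
  by (simp add: choose_parent_def parent_urn_def)

lemma count_parent_urn: "count (parent_urn N E) j = (if j < N then outdeg E j + 1 else 0)"
  by (simp add: parent_urn_def count_sum del: replicate_mset_Suc)

lemma size_parent_urn:
  assumes "\<forall>e\<in>#E. fst e < N"
  shows "size (parent_urn N E) = N + size E"
  using assms by (simp add: parent_urn_def sum_Suc sum_outdeg)

lemma parent_urn_nonempty: "0 < N \<Longrightarrow> parent_urn N E \<noteq> {#}"
  by (metis count_empty count_parent_urn add_eq_0_iff_both_eq_0 one_neq_zero)

lemma set_pmf_choose_parent: "0 < N \<Longrightarrow> set_pmf (choose_parent N E) = {..<N}"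
  by (auto simp: choose_parent_urn parent_urn_nonempty count_parent_urn split: if_splits
      simp flip: count_greater_zero_iff)

lemma pmf_choose_parent:
  assumes "j < N" and "\<forall>e\<in>#E. fst e < N"
  shows "pmf (choose_parent N E) j = weight E j / (real N + real (size E))"
  using assms by (simp add: choose_parent_urn parent_urn_nonempty count_parent_urn size_parent_urn weight_def)

lemma expectation_bind_pmf_finite:
  fixes h :: "'b \<Rightarrow> real"
  assumes "finite (set_pmf p)" and "\<And>x. x \<in> set_pmf p \<Longrightarrow> finite (set_pmf (f x))"
  shows "measure_pmf.expectation (bind_pmf p f) h =
         measure_pmf.expectation p (\<lambda>x. measure_pmf.expectation (f x) h)"
proof -
  define T where "T = (\<Union>x\<in>set_pmf p. set_pmf (f x))"
  have T: "finite T" unfolding T_def using assms by auto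
  have inner: "measure_pmf.expectation (f x) h = (\<Sum>y\<in>T. h y * pmf (f x) y)" if "x \<in> set_pmf p" for x
    by (rule integral_measure_pmf_real[OF T]) (use that in \<open>auto simp: T_def\<close>)
  have pmf_bind_sum: "pmf (bind_pmf p f) y = (\<Sum>x\<in>set_pmf p. pmf (f x) y * pmf p x)" for y
    unfolding pmf_bind by (rule integral_measure_pmf_real) (auto simp: assms)
  have "measure_pmf.expectation (bind_pmf p f) h = (\<Sum>y\<in>T. h y * pmf (bind_pmf p f) y)"
    by (rule integral_measure_pmf_real[OF T]) (auto simp: T_def)
  also have "\<dots> = (\<Sum>x\<in>set_pmf p. (\<Sum>y\<in>T. h y * pmf (f x) y) * pmf p x)"
    by (simp add: pmf_bind_sum sum_distrib_left sum_distrib_right mult_ac sum.swap[of _ T])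
  also have "\<dots> = (\<Sum>x\<in>set_pmf p. measure_pmf.expectation (f x) h * pmf p x)"
    by (intro sum.cong) (simp_all add: inner)
  also have "\<dots> = measure_pmf.expectation p (\<lambda>x. measure_pmf.expectation (f x) h)"
    by (rule integral_measure_pmf_real[symmetric]) (auto simp: assms)
  finally show ?thesis .
qed

lemma expectation_cong_pmf:
  "(\<And>x. x \<in> set_pmf p \<Longrightarrow> f x = g x) \<Longrightarrow>
   measure_pmf.expectation p f = measure_pmf.expectation p (g :: _ \<Rightarrow> real)"
  by (rule integral_cong_AE) (auto simp: AE_measure_pmf_iff)

lemma expectation_plus_indicator:
  assumes "finite (set_pmf p)"
  shows "measure_pmf.expectation p (\<lambda>v. a + b * indicator {j} v) = a + b * pmf p j"
  using assms
  by (simp add: integrable_measure_pmf_finite measure_pmf_single)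

lemma expectation_choose_parent_rising:
  assumes "j < N" and "\<forall>e\<in>#E. fst e < N"
  shows "measure_pmf.expectation (choose_parent N E) (\<lambda>v. pochhammer (weight (add_mset (v, N) E) j) k)
       = pochhammer (weight E j) k * (1 + real k / (real N + real (size E)))"
proof -
  define w where "w = weight E j"
  have S: "real N + real (size E) > 0" using assms by simp
  have "measure_pmf.expectation (choose_parent N E) (\<lambda>v. pochhammer (weight (add_mset (v, N) E) j) k)
      = measure_pmf.expectation (choose_parent N E)
          (\<lambda>v. pochhammer w k + (pochhammer (w + 1) k - pochhammer w k) * indicator {j} v)"
    by (intro expectation_cong_pmf) (simp add: weight_add_edge w_def indicator_def)
  also have "\<dots> = pochhammer w k + (pochhammer (w + 1) k - pochhammer w k) * (w / (real N + real (size E)))"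
    using assms by (simp add: expectation_plus_indicator set_pmf_choose_parent pmf_choose_parent w_def)
  also have "\<dots> = pochhammer w k * (1 + real k / (real N + real (size E)))"
    using pochhammer_succ_diff[of w k] S by (simp add: field_simps)
  finally show ?thesis unfolding w_def .
qed

lemma add_parents_support:
  assumes "E' \<in> set_pmf (add_parents N E i)" and "0 < N"
  shows "\<exists>V. E' = E + image_mset (\<lambda>v. (v, N)) V \<and> size V = i \<and> (\<forall>v\<in>#V. v < N)"
  using assms(1)
proof (induction i arbitrary: E')
  case (Suc i)
  then obtain E'' v where "E'' \<in> set_pmf (add_parents N E i)" "v < N" "E' = add_mset (v, N) E''"
    using set_pmf_choose_parent[OF assms(2)] by auto
  with Suc.IH show ?case
    by (metis add_mset_add_single image_mset_add_mset set_mset_add_mset_insert insert_iff size_add_mset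
        union_mset_add_mset_right)
qed simp

lemma finite_set_pmf_add_parents: "0 < N \<Longrightarrow> finite (set_pmf (add_parents N E i))"
  by (induction i) (auto simp: set_pmf_choose_parent)

lemma expectation_add_parents_rising:
  assumes "j < N" and "\<forall>e\<in>#E. fst e < N"
  shows "measure_pmf.expectation (add_parents N E i) (\<lambda>E'. pochhammer (weight E' j) k)
       = pochhammer (weight E j) k * (\<Prod>l<i. 1 + real k / (real N + real (size E) + real l))"
proof (induction i)
  case (Suc i)
  have N: "0 < N" using assms by simp
  have step: "measure_pmf.expectation (map_pmf (\<lambda>v. add_mset (v, N) E') (choose_parent N E'))
        (\<lambda>E'. pochhammer (weight E' j) k)
      = pochhammer (weight E' j) k * (1 + real k / (real N + real (size E) + real i))"
    if E': "E' \<in> set_pmf (add_parents N E i)" for E'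
  proof -
    obtain V where "E' = E + image_mset (\<lambda>v. (v, N)) V" "size V = i" "\<forall>v\<in>#V. v < N"
      using add_parents_support[OF E' N] by blast
    then have "\<forall>e\<in>#E'. fst e < N" "size E' = size E + i"
      using assms(2) by auto
    then show ?thesis
      using expectation_choose_parent_rising[OF assms(1)] by (simp add: add.assoc)
  qed
  have "measure_pmf.expectation (add_parents N E (Suc i)) (\<lambda>E'. pochhammer (weight E' j) k)
      = measure_pmf.expectation (add_parents N E i) (\<lambda>E'. measure_pmf.expectation
          (map_pmf (\<lambda>v. add_mset (v, N) E') (choose_parent N E')) (\<lambda>E'. pochhammer (weight E' j) k))"
    unfolding add_parents.simps
    by (rule expectation_bind_pmf_finite) (auto simp: finite_set_pmf_add_parents N set_pmf_choose_parent)
  also have "\<dots> = measure_pmf.expectation (add_parents N E i)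
          (\<lambda>E'. pochhammer (weight E' j) k * (1 + real k / (real N + real (size E) + real i)))"
    by (rule expectation_cong_pmf) (rule step)
  finally show ?case
    using Suc.IH by simp
qed simp

lemma pa_circuit_support:
  assumes "E \<in> set_pmf (pa_circuit m n)"
  shows "size E = m * n \<and> (\<forall>e\<in>#E. fst e < snd e \<and> snd e \<le> n)
     \<and> (\<forall>k. indeg E k = (if 1 \<le> k \<and> k \<le> n then m else 0))"
  using assms
proof (induction n arbitrary: E)
  case 0
  then show ?case by (simp add: indeg_def)
next
  case (Suc n)
  then obtain E0 V where E0: "E0 \<in> set_pmf (pa_circuit m n)"
    and E: "E = E0 + image_mset (\<lambda>v. (v, Suc n)) V" and V: "size V = m" "\<forall>v\<in>#V. v < Suc n"
    using add_parents_support by fastforce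
  have "indeg E k = indeg E0 k + (if k = Suc n then m else 0)" for k
    using V unfolding E indeg_def by (simp add: filter_mset_image_mset)
  then show ?case
    using Suc.IH[OF E0] V unfolding E by fastforce
qed

lemma finite_set_pmf_pa_circuit: "finite (set_pmf (pa_circuit m n))"
  by (induction n) (auto simp: finite_set_pmf_add_parents)

lemma weight_unborn:
  assumes "E \<in> set_pmf (pa_circuit m n)" and "n \<le> j"
  shows "weight E j = 1"
proof -
  have "\<forall>e\<in>#E. fst e \<noteq> j"
    using pa_circuit_support[OF assms(1)] assms(2) by fastforce
  then show ?thesis
    by (simp add: weight_def outdeg_def filter_mset_eq_mempty_iff)
qed

definition rising_moment :: "nat \<Rightarrow> nat \<Rightarrow> nat \<Rightarrow> nat \<Rightarrow> real" where
  "rising_moment m j k n = measure_pmf.expectation (pa_circuit m n) (\<lambda>E. pochhammer (weight E j) k)"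

text \<open>Before the \<open>l\<close>-th draw of time \<open>n + 1\<close> the urn holds \<open>(m + 1) n + 1 + l\<close> balls.\<close>
lemma prod_draw_factors_eq:
  "(\<Prod>l<m. 1 + real k / (real (Suc n) + real (m * n) + real l))
     = (\<Prod>i<k. (real n + (1 + real i / (real m + 1))) / (real n + (real i + 1) / (real m + 1)))"
proof -
  define a where "a = real (Suc n) + real (m * n)"
  have "a > 0" unfolding a_def by (intro add_pos_nonneg) auto
  have m1: "real m + 1 > 0" by simp
  have factor: "(a + real m + real i) / (a + real i)
      = (real n + (1 + real i / (real m + 1))) / (real n + (real i + 1) / (real m + 1))" for i
  proof -
    have "real n + (1 + real i / (real m + 1)) = (a + real m + real i) / (real m + 1)"
      "real n + (real i + 1) / (real m + 1) = (a + real i) / (real m + 1)"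
      using m1 by (simp_all add: a_def field_simps)
    then show ?thesis using m1 by simp
  qed
  from \<open>a > 0\<close> have "(\<Prod>l<m. 1 + real k / (a + real l)) = (\<Prod>i<k. (a + real m + real i) / (a + real i))"
    by (simp add: prod_one_plus_div_telescope pochhammer_prod prod_dividef atLeast0LessThan)
  also have "\<dots> = (\<Prod>i<k. (real n + (1 + real i / (real m + 1))) / (real n + (real i + 1) / (real m + 1)))"
    by (simp only: factor)
  finally show ?thesis by (simp add: a_def)
qed

lemma rising_moment_Suc:
  assumes "j \<le> n"
  shows "rising_moment m j k (Suc n) = rising_moment m j k n
           * (\<Prod>i<k. (real n + (1 + real i / (real m + 1))) / (real n + (real i + 1) / (real m + 1)))"
proof -
  have step: "measure_pmf.expectation (add_parents (Suc n) E m) (\<lambda>E'. pochhammer (weight E' j) k)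
      = pochhammer (weight E j) k * (\<Prod>l<m. 1 + real k / (real (Suc n) + real (m * n) + real l))"
    if E: "E \<in> set_pmf (pa_circuit m n)" for E
  proof -
    have "\<forall>e\<in>#E. fst e < Suc n" "size E = m * n"
      using pa_circuit_support[OF E] by fastforce+
    then show ?thesis
      using expectation_add_parents_rising[of j "Suc n" E m k] assms by simp
  qed
  have "rising_moment m j k (Suc n) = measure_pmf.expectation (pa_circuit m n)
      (\<lambda>E. measure_pmf.expectation (add_parents (Suc n) E m) (\<lambda>E'. pochhammer (weight E' j) k))"
    unfolding rising_moment_def pa_circuit.simps
    by (rule expectation_bind_pmf_finite) (simp_all add: finite_set_pmf_pa_circuit finite_set_pmf_add_parents)
  also have "\<dots> = measure_pmf.expectation (pa_circuit m n) (\<lambda>E. pochhammer (weight E j) k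
      * (\<Prod>l<m. 1 + real k / (real (Suc n) + real (m * n) + real l)))"
    by (rule expectation_cong_pmf) (rule step)
  also have "\<dots> = rising_moment m j k n * (\<Prod>l<m. 1 + real k / (real (Suc n) + real (m * n) + real l))"
    by (simp only: rising_moment_def integral_mult_left_zero)
  finally show ?thesis
    by (simp only: prod_draw_factors_eq)
qed

lemma rising_moment_closed_form:
  assumes "j \<le> n"
  shows "rising_moment m j k n = fact k
           * (\<Prod>i<k. \<Prod>t=j..<n. (real t + (1 + real i / (real m + 1))) / (real t + (real i + 1) / (real m + 1)))"
  using assms
proof (induction n rule: nat_induct_at_least)
  case base
  have "rising_moment m j k j = pochhammer 1 k"
    unfolding rising_moment_def
    by (subst expectation_cong_pmf[where g = "\<lambda>_. pochhammer 1 k"]) (simp_all add: weight_unborn)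
  then show ?case
    by (simp add: pochhammer_fact)
next
  case (Suc n)
  then show ?case
    by (simp only: rising_moment_Suc prod.atLeastLessThan_Suc prod.distrib mult.assoc)
qed

theorem rising_moment_limit:
  "(\<lambda>n. rising_moment m j k n / real n powr (real k * (real m / (real m + 1))))
     \<longlonglongrightarrow> fact k * (\<Prod>i<k. Gamma (real j + (real i + 1) / (real m + 1)) / Gamma (real j + (1 + real i / (real m + 1))))"
proof -
  define p where "p = real m / (real m + 1)"
  define Q where "Q i n = (\<Prod>t=j..<n. (real t + (1 + real i / (real m + 1))) / (real t + (real i + 1) / (real m + 1)))"
    for i n
  have exponent: "(1 + real i / (real m + 1)) - (real i + 1) / (real m + 1) = p" for i
    by (simp add: p_def divide_simps)
  have factor_limit: "(\<lambda>n. Q i n / real n powr p)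
      \<longlonglongrightarrow> Gamma (real j + (real i + 1) / (real m + 1)) / Gamma (real j + (1 + real i / (real m + 1)))" for i
    using prod_shifted_quotient_limit[of "1 + real i / (real m + 1)" "(real i + 1) / (real m + 1)" j]
    unfolding Q_def exponent by (simp add: add_pos_nonneg)
  have "(\<lambda>n. fact k * (\<Prod>i<k. Q i n / real n powr p))
     \<longlonglongrightarrow> fact k * (\<Prod>i<k. Gamma (real j + (real i + 1) / (real m + 1)) / Gamma (real j + (1 + real i / (real m + 1))))"
    by (intro tendsto_mult tendsto_const tendsto_prod factor_limit)
  moreover have "eventually (\<lambda>n. fact k * (\<Prod>i<k. Q i n / real n powr p)
      = rising_moment m j k n / real n powr (real k * p)) sequentially"
    using eventually_ge_at_top[of "max j 1"]
  proof eventually_elim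
    case (elim n)
    have "real n powr (real k * p) = (real n powr p) ^ k"
      using elim by (simp add: powr_realpow[symmetric] powr_powr mult.commute)
    moreover have "rising_moment m j k n = fact k * (\<Prod>i<k. Q i n)"
      using elim by (simp add: rising_moment_closed_form Q_def)
    ultimately show ?case
      by (simp add: prod_dividef)
  qed
  ultimately show ?thesis
    unfolding p_def by (rule Lim_transform_eventually)
qed

lemma degree_eq_weight:
  assumes "E \<in> set_pmf (pa_circuit m n)" and "j \<le> n"
  shows "real (degree E j) = weight E j + (real (if j = 0 then 0 else m) - 1)"
  using pa_circuit_support[OF assms(1)] assms(2) by (simp add: degree_def weight_def)

lemma expectation_degree:
  assumes "j \<le> n"
  shows "measure_pmf.expectation (pa_circuit m n) (\<lambda>E. real (degree E j))
       = rising_moment m j 1 n + (real (if j = 0 then 0 else m) - 1)"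
proof -
  have "measure_pmf.expectation (pa_circuit m n) (\<lambda>E. real (degree E j))
      = measure_pmf.expectation (pa_circuit m n) (\<lambda>E. weight E j + (real (if j = 0 then 0 else m) - 1))"
    using assms by (intro expectation_cong_pmf degree_eq_weight)
  then show ?thesis
    by (simp add: rising_moment_def integrable_measure_pmf_finite finite_set_pmf_pa_circuit)
qed

lemma variance_degree:
  assumes "j \<le> n"
  shows "measure_pmf.variance (pa_circuit m n) (\<lambda>E. real (degree E j))
       = rising_moment m j 2 n - rising_moment m j 1 n - (rising_moment m j 1 n)\<^sup>2"
proof -
  define \<mu> where "\<mu> = rising_moment m j 1 n"
  have "measure_pmf.variance (pa_circuit m n) (\<lambda>E. real (degree E j))
      = measure_pmf.expectation (pa_circuit m n)
          (\<lambda>E. pochhammer (weight E j) 2 - (1 + 2 * \<mu>) * weight E j + \<mu>\<^sup>2)"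
  proof (rule expectation_cong_pmf)
    fix E assume "E \<in> set_pmf (pa_circuit m n)"
    then show "(real (degree E j) - measure_pmf.expectation (pa_circuit m n) (\<lambda>E. real (degree E j)))\<^sup>2
        = pochhammer (weight E j) 2 - (1 + 2 * \<mu>) * weight E j + \<mu>\<^sup>2"
      using assms by (simp add: degree_eq_weight expectation_degree \<mu>_def pochhammer_Suc power2_eq_square
          algebra_simps numeral_2_eq_2)
  qed
  also have "\<dots> = rising_moment m j 2 n - (1 + 2 * \<mu>) * \<mu> + \<mu>\<^sup>2"
    by (simp add: rising_moment_def \<mu>_def integrable_measure_pmf_finite finite_set_pmf_pa_circuit)
  finally show ?thesis
    by (simp add: \<mu>_def power2_eq_square algebra_simps)
qed

lemma second_rising_moment_constant:
  fixes m j :: nat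
  shows "fact 2 * (\<Prod>i<2. Gamma (real j + (real i + 1) / (real m + 1)) / Gamma (real j + (1 + real i / (real m + 1))))
       = 2 * (real m + 1) * Gamma (real j + 2 / (real m + 1)) / (((real m + 1) * real j + 1) * Gamma (real j + 1))"
proof -
  define c where "c = 1 / (real m + 1)"
  have c: "0 < c" "0 < real j + c"
    by (simp_all add: c_def add_nonneg_pos)
  have shift: "Gamma (real j + (1 + c)) = (real j + c) * Gamma (real j + c)"
    using Gamma_plus1[of "real j + c"] c nonpos_Ints_nonpos by (fastforce simp: ac_simps)
  have cancel: "2 * (a / b * (d / (u * a))) = 2 * M * d / ((M * u) * b)"
    if "a \<noteq> 0" "u \<noteq> 0" "M \<noteq> 0" for a b d u M :: real
    using that by (simp add: field_simps)
  have "fact 2 * (\<Prod>i<2. Gamma (real j + (real i + 1) / (real m + 1)) / Gamma (real j + (1 + real i / (real m + 1))))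
      = 2 * (Gamma (real j + c) / Gamma (real j + 1) * (Gamma (real j + 2 / (real m + 1)) / Gamma (real j + (1 + c))))"
    by (simp add: numeral_2_eq_2 c_def)
  also have "\<dots> = 2 * (real m + 1) * Gamma (real j + 2 / (real m + 1)) / (((real m + 1) * (real j + c)) * Gamma (real j + 1))"
    unfolding shift using c by (intro cancel) (simp_all add: Gamma_real_pos less_imp_neq[symmetric])
  also have "(real m + 1) * (real j + c) = (real m + 1) * real j + 1"
    by (simp add: c_def field_simps)
  finally show ?thesis .
qed

lemma first_rising_moment_limit:
  "(\<lambda>n. rising_moment m j 1 n / real n powr (real m / (real m + 1)))
     \<longlonglongrightarrow> Gamma (real j + 1 / (real m + 1)) / Gamma (real j + 1)"
  using rising_moment_limit[of m j 1] by simp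

lemma second_rising_moment_limit:
  "(\<lambda>n. rising_moment m j 2 n / real n powr (2 * real m / (real m + 1)))
     \<longlonglongrightarrow> 2 * (real m + 1) * Gamma (real j + 2 / (real m + 1)) / (((real m + 1) * real j + 1) * Gamma (real j + 1))"
  using rising_moment_limit[of m j 2] unfolding second_rising_moment_constant by simp

theorem expectation_degree_asymp:
  assumes "m \<ge> 1"
  shows "(\<lambda>n. measure_pmf.expectation (pa_circuit m n) (\<lambda>E. real (degree E j)))
           \<sim>[at_top] (\<lambda>n. Gamma (real j + 1 / (real m + 1)) / Gamma (real j + 1) * real n powr (real m / (real m + 1)))"
proof (rule asymp_equivI'_const)
  let ?p = "real m / (real m + 1)"
  let ?\<delta> = "real (if j = 0 then 0 else m) - 1"
  have "(\<lambda>n. rising_moment m j 1 n / real n powr ?p + ?\<delta> / real n powr ?p)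
      \<longlonglongrightarrow> Gamma (real j + 1 / (real m + 1)) / Gamma (real j + 1) + 0"
    using assms by (intro tendsto_add first_rising_moment_limit tendsto_divide_powr_zero) auto
  moreover have "eventually (\<lambda>n. rising_moment m j 1 n / real n powr ?p + ?\<delta> / real n powr ?p
      = measure_pmf.expectation (pa_circuit m n) (\<lambda>E. real (degree E j)) / real n powr ?p) sequentially"
    using eventually_ge_at_top[of j]
    by eventually_elim (simp add: expectation_degree add_divide_distrib)
  ultimately show "(\<lambda>n. measure_pmf.expectation (pa_circuit m n) (\<lambda>E. real (degree E j)) / real n powr ?p)
      \<longlonglongrightarrow> Gamma (real j + 1 / (real m + 1)) / Gamma (real j + 1)"
    by (simp add: Lim_transform_eventually)
  show "Gamma (real j + 1 / (real m + 1)) / Gamma (real j + 1) \<noteq> 0"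
    by (simp add: Gamma_real_pos add_nonneg_pos less_imp_neq[symmetric])
qed

theorem variance_degree_asymp:
  assumes "m \<ge> 1"
  shows "(\<lambda>n. measure_pmf.variance (pa_circuit m n) (\<lambda>E. real (degree E j)))
           \<sim>[at_top] (\<lambda>n. (2 * (real m + 1) * Gamma (real j + 2 / (real m + 1))
                             / (((real m + 1) * real j + 1) * Gamma (real j + 1))
                           - (Gamma (real j + 1 / (real m + 1)))\<^sup>2 / (Gamma (real j + 1))\<^sup>2)
                          * real n powr (2 * real m / (real m + 1)))"
proof (rule asymp_equivI'_const)
  let ?p = "real m / (real m + 1)"
  let ?q = "2 * real m / (real m + 1)"
  let ?C1 = "Gamma (real j + 1 / (real m + 1)) / Gamma (real j + 1)"
  let ?C2 = "2 * (real m + 1) * Gamma (real j + 2 / (real m + 1)) / (((real m + 1) * real j + 1) * Gamma (real j + 1))"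
  have "(\<lambda>n. rising_moment m j 2 n / real n powr ?q
            - rising_moment m j 1 n / real n powr ?p * (1 / real n powr ?p)
            - (rising_moment m j 1 n / real n powr ?p)\<^sup>2) \<longlonglongrightarrow> ?C2 - ?C1 * 0 - ?C1\<^sup>2"
    using assms by (intro tendsto_diff tendsto_mult tendsto_power first_rising_moment_limit
        second_rising_moment_limit tendsto_divide_powr_zero) auto
  moreover have "eventually (\<lambda>n. rising_moment m j 2 n / real n powr ?q
            - rising_moment m j 1 n / real n powr ?p * (1 / real n powr ?p)
            - (rising_moment m j 1 n / real n powr ?p)\<^sup>2
      = measure_pmf.variance (pa_circuit m n) (\<lambda>E. real (degree E j)) / real n powr ?q) sequentially"
    using eventually_ge_at_top[of "max j 1"]
  proof eventually_elim
    case (elim n)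
    have "(real n powr ?p)\<^sup>2 = real n powr (?p * 2)"
      using elim by (simp add: powr_realpow[symmetric] powr_powr)
    also have "?p * 2 = ?q" by simp
    finally have q: "real n powr ?q = (real n powr ?p)\<^sup>2" ..
    have "j \<le> n" "0 < real n powr ?p"
      using elim by simp_all
    then show ?case
      by (simp only: q variance_degree) (simp add: power2_eq_square diff_divide_distrib)
  qed
  ultimately show "(\<lambda>n. measure_pmf.variance (pa_circuit m n) (\<lambda>E. real (degree E j)) / real n powr ?q)
      \<longlonglongrightarrow> ?C2 - (Gamma (real j + 1 / (real m + 1)))\<^sup>2 / (Gamma (real j + 1))\<^sup>2"
    by (simp add: Lim_transform_eventually power_divide)
  have "?C1\<^sup>2 < ?C2"
    using Gamma_quotient_square_less[of "1 / (real m + 1)" "real j"] second_rising_moment_constant[of j m]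
    by (simp add: numeral_2_eq_2)
  then show "?C2 - (Gamma (real j + 1 / (real m + 1)))\<^sup>2 / (Gamma (real j + 1))\<^sup>2 \<noteq> 0"
    by (simp add: power_divide)
qed

theorem corollary2:
  fixes m j :: nat
  assumes "m \<ge> 1"
  shows "((\<lambda>n. measure_pmf.expectation (pa_circuit m n) (\<lambda>E. real (degree E j)))
           \<sim>[at_top] (\<lambda>n. Gamma (real j + 1 / (real m + 1)) / Gamma (real j + 1)
                          * real n powr (real m / (real m + 1)))) \<and>
         ((\<lambda>n. measure_pmf.variance (pa_circuit m n) (\<lambda>E. real (degree E j)))
           \<sim>[at_top] (\<lambda>n. (2 * (real m + 1) * Gamma (real j + 2 / (real m + 1))
                             / (((real m + 1) * real j + 1) * Gamma (real j + 1))
                           - (Gamma (real j + 1 / (real m + 1)))\<^sup>2 / (Gamma (real j + 1))\<^sup>2)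
                          * real n powr (2 * real m / (real m + 1))))"
  using expectation_degree_asymp[OF assms] variance_degree_asymp[OF assms] ..

end
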